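(* Let $\varphi(x_1,\dots,x_n)=\bigwedge_{i=1}^m \mathit{cl}_i$ be a 3-CNF formula (each clause has exactly three distinct literals). Let $\mathcal{A}_\varphi$ be the one-player (all places owned by player 1) weighted recursive game graph with modules $A_0$, one module $A_y$ for each literal $y\in\{x_1,\neg x_1,\dots,x_n,\neg x_n\}$, and one module $A_{\mathit{cl}_i}$ per clause, each with a single entry and a single exit, defined as follows: $A_0$ (the initial module) invokes, in an infinite loop, boxes calling $A_{\mathit{cl}_1},A_{\mathit{cl}_2},\dots,A_{\mathit{cl}_m}$ in sequence, all transitions of weight $0$; in $A_{\mathit{cl}_i}$, for each literal $y$ of $\mathit{cl}_i$ there is a weight-$0$ transition from the entry to a box invoking $A_y$ and a weight-$0$ transition from that box's return to the exit; in $A_y$, the entry has exactly two outgoing transitions: a "false" transition directly to the exit with weight $-1$, and a "true" transition of weight $-1$ to a box invoking $A_{\neg y}$ (with $\neg\neg x=x$), whose return leads to the exit with weight $+2$. Then player 1 has a modular winning strategy in $\mathcal{A}_\varphi$ for the objective $\mathrm{LimInfAvg}\geq 0$ if and only if $\varphi$ is satisfiable.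
   Context: A weighted recursive game graph consists of modules, each with nodes, entry and exit nodes, boxes each invoking some module, and weighted transitions among nodes, calls (box, entry of invoked module) and returns (box, exit of invoked module); plays evolve over configurations consisting of a call stack of boxes and a current node, a call pushing the box and entering the invoked module, reaching an exit popping the box and continuing from the corresponding return. A modular strategy for player 1 assigns to each module a local strategy whose choice depends only on the sequence of nodes visited in the current invocation of that module (not on the calling context). A strategy is winning for $\mathrm{LimInfAvg}\geq 0$ if every consistent play $\pi$ has $\liminf_m w(\pi[1,m])/m\geq 0$, where $w$ is the sum of transition weights. *)

theory Defs
  imports Complex_Main "HOL-Library.Extended_Real"
begin

text \<open>Positions inside a module: nodes, calls (box, entry of invoked module)
  and returns (box, exit of invoked module).\<close>
datatype ('v, 'b) pos = Nd 'v | Cl 'b 'v | Rt 'b 'v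

record ('m, 'v, 'b) rgg =
  mods     :: "'m set"
  init     :: 'm
  start    :: 'v
  nodes    :: "'m \<Rightarrow> 'v set"
  entries  :: "'m \<Rightarrow> 'v set"
  exits    :: "'m \<Rightarrow> 'v set"
  boxes    :: "'m \<Rightarrow> 'b set"
  invokes  :: "'m \<Rightarrow> 'b \<Rightarrow> 'm"
  trans    :: "'m \<Rightarrow> (('v, 'b) pos \<times> int \<times> ('v, 'b) pos) set"
  own1     :: "'m \<Rightarrow> ('v, 'b) pos set"

text \<open>A configuration is the call stack, each frame recording the module being
  executed and the (reversed, most recent first) sequence of positions visited
  in that invocation; the head of the top frame is the current position.
  Projecting away the histories gives the usual (stack of boxes, current node).\<close>
type_synonym ('m, 'v, 'b) config = "('m \<times> ('v, 'b) pos list) list"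

inductive step :: "('m, 'v, 'b, 'z) rgg_scheme \<Rightarrow> ('m, 'v, 'b) config \<Rightarrow> int
                    \<Rightarrow> ('m, 'v, 'b) config \<Rightarrow> bool" for G where
  internal: "(p, w, q) \<in> trans G m \<Longrightarrow>
     step G ((m, p # h) # st) w ((m, q # p # h) # st)"
| call: "b \<in> boxes G m \<Longrightarrow> e \<in> entries G (invokes G m b) \<Longrightarrow>
     step G ((m, Cl b e # h) # st) 0
            ((invokes G m b, [Nd e]) # (m, Cl b e # h) # st)"
| return: "m' = invokes G m b \<Longrightarrow> x \<in> exits G m' \<Longrightarrow>
     step G ((m', Nd x # h') # (m, Cl b e # h) # st) 0
            ((m, Rt b x # Cl b e # h) # st)"

definition init_config :: "('m, 'v, 'b, 'z) rgg_scheme \<Rightarrow> ('m, 'v, 'b) config" where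
  "init_config G = [(init G, [Nd (start G)])]"

text \<open>A modular strategy of player 1: for each module a local strategy mapping the
  sequence of positions visited in the current invocation (most recent first)
  to a transition of that module.\<close>
type_synonym ('m, 'v, 'b) mstrategy =
  "'m \<Rightarrow> ('v, 'b) pos list \<Rightarrow> (('v, 'b) pos \<times> int \<times> ('v, 'b) pos)"

definition legal_strategy :: "('m, 'v, 'b, 'z) rgg_scheme \<Rightarrow> ('m, 'v, 'b) mstrategy \<Rightarrow> bool" where
  "legal_strategy G \<sigma> \<longleftrightarrow>
     (\<forall>m p h. p \<in> own1 G m \<and> (\<exists>t\<in>trans G m. fst t = p) \<longrightarrow>
        \<sigma> m (p # h) \<in> trans G m \<and> fst (\<sigma> m (p # h)) = p)"

definition consistent_play :: "('m, 'v, 'b, 'z) rgg_scheme \<Rightarrow> ('m, 'v, 'b) mstrategy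
     \<Rightarrow> (nat \<Rightarrow> ('m, 'v, 'b) config) \<Rightarrow> (nat \<Rightarrow> int) \<Rightarrow> bool" where
  "consistent_play G \<sigma> c w \<longleftrightarrow>
     c 0 = init_config G \<and>
     (\<forall>i. step G (c i) (w i) (c (Suc i))) \<and>
     (\<forall>i m p h st. c i = (m, p # h) # st \<and> p \<in> own1 G m \<and> (\<exists>t\<in>trans G m. fst t = p) \<longrightarrow>
        (\<exists>q. \<sigma> m (p # h) = (p, w i, q) \<and> c (Suc i) = (m, q # p # h) # st))"

definition liminf_avg_nonneg :: "(nat \<Rightarrow> int) \<Rightarrow> bool" where
  "liminf_avg_nonneg w \<longleftrightarrow>
     Liminf sequentially (\<lambda>k. ereal (real_of_int (\<Sum>i<k. w i) / real k)) \<ge> 0"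

definition modular_winning :: "('m, 'v, 'b, 'z) rgg_scheme \<Rightarrow> ('m, 'v, 'b) mstrategy \<Rightarrow> bool" where
  "modular_winning G \<sigma> \<longleftrightarrow> legal_strategy G \<sigma> \<and>
     (\<forall>c w. consistent_play G \<sigma> c w \<longrightarrow> liminf_avg_nonneg w)"

definition has_modular_winning :: "('m, 'v, 'b, 'z) rgg_scheme \<Rightarrow> bool" where
  "has_modular_winning G \<longleftrightarrow> (\<exists>\<sigma>. modular_winning G \<sigma>)"

text \<open>Literal \<open>(k, True)\<close> is \<open>x\<^sub>k\<close>, \<open>(k, False)\<close> is \<open>\<not>x\<^sub>k\<close>; a clause is a list of literals,
  a formula a list of clauses.\<close>
type_synonym lit = "nat \<times> bool"

definition neg_lit :: "lit \<Rightarrow> lit" where "neg_lit l = (fst l, \<not> snd l)"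

definition lit_val :: "(nat \<Rightarrow> bool) \<Rightarrow> lit \<Rightarrow> bool" where
  "lit_val a l \<longleftrightarrow> a (fst l) = snd l"

definition satisfiable :: "lit list list \<Rightarrow> bool" where
  "satisfiable cls \<longleftrightarrow> (\<exists>a. \<forall>c\<in>set cls. \<exists>l\<in>set c. lit_val a l)"

definition is_3cnf :: "nat \<Rightarrow> lit list list \<Rightarrow> bool" where
  "is_3cnf n cls \<longleftrightarrow> (\<forall>c\<in>set cls. length c = 3 \<and> distinct c \<and> (\<forall>l\<in>set c. fst l \<in> {1..n}))"

datatype modname = M0 | MLit lit | MCl nat
datatype vtx = En | Ex

definition phi_game :: "nat \<Rightarrow> lit list list \<Rightarrow> (modname, vtx, nat) rgg" where
  "phi_game n cls = \<lparr>
     mods = {M0} \<union> MLit ` ({1..n} \<times> UNIV) \<union> MCl ` {..<length cls},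
     init = M0,
     start = En,
     nodes = (\<lambda>_. {En, Ex}),
     entries = (\<lambda>_. {En}),
     exits = (\<lambda>_. {Ex}),
     boxes = (\<lambda>m. case m of M0 \<Rightarrow> {..<length cls} | MCl i \<Rightarrow> {..<3} | MLit y \<Rightarrow> {0}),
     invokes = (\<lambda>m b. case m of M0 \<Rightarrow> MCl b
                               | MCl i \<Rightarrow> MLit (cls ! i ! b)
                               | MLit y \<Rightarrow> MLit (neg_lit y)),
     trans = (\<lambda>m. case m of
         M0 \<Rightarrow> (if cls = [] then {} else
                 {(Nd En, 0, Cl 0 En)} \<union>
                 {(Rt i Ex, 0, Cl (Suc i mod length cls) En) | i. i < length cls})
       | MCl i \<Rightarrow> {(Nd En, 0, Cl j En) | j. j < 3} \<union> {(Rt j Ex, 0, Nd Ex) | j. j < 3}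
       | MLit y \<Rightarrow> {(Nd En, -1, Nd Ex), (Nd En, -1, Cl 0 En), (Rt 0 Ex, 2, Nd Ex)}),
     own1 = (\<lambda>_. UNIV) \<rparr>"

end

theory Submission
  imports Defs
begin

(* (1) Long-run averages: the objective LimInfAvg >= 0 holds when the partial sums are
       bounded below (e.g. nonnegative at periodic checkpoints with bounded step weights),
       and fails when the partial sums decrease linearly along an arithmetic progression.

   (2) One-player games: when player 1 owns every place, a strategy determines at most one
       play, computed by iterating a deterministic successor function play_succ; so a modular
       strategy is winning iff it is legal and this unique play (if it never gets stuck)
       satisfies the objective.  In A_phi the unique play never gets stuck unless phi is empty.

   (3) The play of A_phi under a legal strategy sigma is governed by two choices: which literal
       each clause module calls, and whether each literal module takes its "true" edge.  If a
       called literal y takes "true" and so does neg y, the play recurses forever with weight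
       -1 every two steps; otherwise every round through the clauses costs -1 per called literal
       that takes "false" and 0 per literal that takes "true".  Hence sigma wins iff it is
       faithful: each called literal is "true" and its negation "false".  Faithful strategies
       yield satisfying assignments and vice versa, which gives the theorem. *)

section \<open>Long-run averages of integer weight sequences\<close>

lemma liminf_avg_nonneg_if_bounded_below:
  fixes w :: "nat \<Rightarrow> int" and C :: int
  assumes bound: "\<And>k. (\<Sum>i<k. w i) \<ge> - C"
  shows "liminf_avg_nonneg w"
proof -
  have "(\<lambda>k. ereal (- real_of_int C / real k)) \<longlonglongrightarrow> ereal 0"
    by (intro tendsto_ereal lim_const_over_n)
  then have lim: "Liminf sequentially (\<lambda>k. ereal (- real_of_int C / real k)) = 0"
    by (simp add: lim_imp_Liminf zero_ereal_def)
  have "\<forall>\<^sub>F k in sequentially.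
          ereal (- real_of_int C / real k) \<le> ereal (real_of_int (\<Sum>i<k. w i) / real k)"
  proof (rule eventually_sequentiallyI[of 1])
    fix k :: nat assume "1 \<le> k"
    have "- real_of_int C \<le> real_of_int (\<Sum>i<k. w i)"
      using bound[of k] by linarith
    then have "- real_of_int C / real k \<le> real_of_int (\<Sum>i<k. w i) / real k"
      by (rule divide_right_mono) simp
    then show "ereal (- real_of_int C / real k) \<le> ereal (real_of_int (\<Sum>i<k. w i) / real k)"
      by simp
  qed
  then have "Liminf sequentially (\<lambda>k. ereal (- real_of_int C / real k))
      \<le> Liminf sequentially (\<lambda>k. ereal (real_of_int (\<Sum>i<k. w i) / real k))"
    by (rule Liminf_mono)
  then show ?thesis unfolding liminf_avg_nonneg_def lim .
qed

lemma not_liminf_avg_nonneg_if_often_below: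
  fixes w :: "nat \<Rightarrow> int" and d :: real
  assumes "d > 0" and often: "\<And>N. \<exists>k\<ge>N. real_of_int (\<Sum>i<k. w i) / real k \<le> - d"
  shows "\<not> liminf_avg_nonneg w"
proof
  assume "liminf_avg_nonneg w"
  moreover have "ereal (- d) < 0" using \<open>d > 0\<close> by simp
  ultimately have "\<forall>\<^sub>F k in sequentially. ereal (- d) < ereal (real_of_int (\<Sum>i<k. w i) / real k)"
    unfolding liminf_avg_nonneg_def le_Liminf_iff by blast
  then obtain N where "\<And>k. k \<ge> N \<Longrightarrow> - d < real_of_int (\<Sum>i<k. w i) / real k"
    unfolding eventually_sequentially by auto
  with often[of N] show False by force
qed

lemma partial_sum_lower_bound:
  fixes w :: "nat \<Rightarrow> int"
  assumes "\<And>i. w i \<ge> - B" and "k' \<le> k"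
  shows "(\<Sum>i<k. w i) \<ge> (\<Sum>i<k'. w i) - B * int (k - k')"
proof -
  have split: "(\<Sum>i<k. w i) = (\<Sum>i<k'. w i) + (\<Sum>i\<in>{k'..<k}. w i)"
    using \<open>k' \<le> k\<close> by (simp add: lessThan_atLeast0 sum.atLeastLessThan_concat)
  have "(\<Sum>i\<in>{k'..<k}. - B) \<le> (\<Sum>i\<in>{k'..<k}. w i)"
    using assms(1) by (rule sum_mono)
  then show ?thesis unfolding split by (simp add: mult.commute)
qed

lemma liminf_avg_nonneg_if_checkpoints:
  fixes w :: "nat \<Rightarrow> int"
  assumes "p > 0" and "B \<ge> 0" and step_bound: "\<And>i. w i \<ge> - B"
    and checkpoint: "\<And>q. (\<Sum>i<a + p * q. w i) \<ge> 0"
  shows "liminf_avg_nonneg w"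
proof (rule liminf_avg_nonneg_if_bounded_below)
  fix k
  obtain k' where k': "k' \<le> k" "k - k' \<le> a + p" "(\<Sum>i<k'. w i) \<ge> 0"
  proof (cases "k < a")
    case True
    then show ?thesis by (intro that[of 0]) auto
  next
    case False
    define q where "q = (k - a) div p"
    have "p * q + (k - a) mod p = k - a" "(k - a) mod p < p"
      using \<open>p > 0\<close> unfolding q_def by simp_all
    then show ?thesis using False checkpoint[of q] by (intro that[of "a + p * q"]) auto
  qed
  have "B * int (k - k') \<le> B * int (a + p)"
    using k'(2) \<open>B \<ge> 0\<close> by (intro mult_left_mono) auto
  then show "(\<Sum>i<k. w i) \<ge> - (B * int (a + p))"
    using partial_sum_lower_bound[where w=w and B=B, OF step_bound k'(1)] k'(3) by linarith
qed

text \<open>If the partial sums decrease by at least one per \<open>p\<close> steps along \<open>a + p * j\<close>, the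
  averages there approach at most \<open>-1/p\<close>, so the objective fails.\<close>

lemma not_liminf_avg_nonneg_if_linear_decrease:
  fixes w :: "nat \<Rightarrow> int"
  assumes "p > 0" and decrease: "\<And>j. (\<Sum>i<a + p * j. w i) \<le> s - int j"
  shows "\<not> liminf_avg_nonneg w"
proof (rule not_liminf_avg_nonneg_if_often_below)
  show "1 / (2 * real p) > 0" using \<open>p > 0\<close> by simp
next
  fix N
  define j where "j = Suc (N + a + 2 * nat \<bar>s\<bar>)"
  define k where "k = a + p * j"
  have "j \<le> p * j" using \<open>p > 0\<close> by simp
  then have "N \<le> k" "0 < k" unfolding k_def j_def by linarith+
  define t where "t = nat \<bar>s\<bar>"
  have "a + 2 * p * t \<le> p * (a + 2 * t)"
    using \<open>p > 0\<close> by (simp add: algebra_simps)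
  also have "\<dots> \<le> p * j" unfolding j_def t_def by (intro mult_left_mono) auto
  finally have "real a + 2 * real p * real t \<le> real p * real j"
    by (simp only: of_nat_le_iff [where 'a=real, symmetric] of_nat_add of_nat_mult of_nat_numeral)
  moreover have "real_of_int s \<le> real t" unfolding t_def by linarith
  ultimately have "(real_of_int s - real j) * (2 * real p) \<le> - real k"
    unfolding k_def using mult_left_mono[of "real_of_int s" "real t" "2 * real p"] by (simp add: algebra_simps)
  moreover have "real_of_int (\<Sum>i<k. w i) \<le> real_of_int s - real j"
    using decrease[of j] unfolding k_def by linarith
  ultimately have "real_of_int (\<Sum>i<k. w i) * (2 * real p) \<le> - real k"
    using mult_right_mono[of _ _ "2 * real p"] by (meson dual_order.trans of_nat_0_le_iff zero_le_mult_iff zero_le_numeral)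
  then have "real_of_int (\<Sum>i<k. w i) / real k \<le> - (1 / (2 * real p))"
    using \<open>0 < k\<close> \<open>p > 0\<close> by (simp add: field_simps)
  then show "\<exists>k\<ge>N. real_of_int (\<Sum>i<k. w i) / real k \<le> - (1 / (2 * real p))"
    using \<open>N \<le> k\<close> by blast
qed

section \<open>The unique play of a strategy in a one-player game\<close>

text \<open>A position with an outgoing transition is where the strategy chooses; at other
  positions the play is forced: a call position enters the invoked module and an exit
  returns to the caller.  \<open>play_succ\<close> computes the next weight and configuration;
  the empty configuration signals that the play is stuck.\<close>

definition has_move :: "('m, 'v, 'b, 'z) rgg_scheme \<Rightarrow> 'm \<Rightarrow> ('v, 'b) pos \<Rightarrow> bool" where
  "has_move G m p \<longleftrightarrow> (\<exists>t\<in>trans G m. fst t = p)"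

fun forced_succ :: "('m, 'v, 'b, 'z) rgg_scheme \<Rightarrow> 'm \<Rightarrow> ('v, 'b) pos \<Rightarrow> ('v, 'b) pos list
    \<Rightarrow> ('m, 'v, 'b) config \<Rightarrow> int \<times> ('m, 'v, 'b) config" where
  "forced_succ G m (Cl b e) h st = (0, (invokes G m b, [Nd e]) # (m, Cl b e # h) # st)"
| "forced_succ G m (Nd x) h ((m', Cl b e # h') # st) = (0, (m', Rt b x # Cl b e # h') # st)"
| "forced_succ G m p h st = (0, [])"

fun play_succ :: "('m, 'v, 'b, 'z) rgg_scheme \<Rightarrow> ('m, 'v, 'b) mstrategy
    \<Rightarrow> ('m, 'v, 'b) config \<Rightarrow> int \<times> ('m, 'v, 'b) config" where
  "play_succ G \<sigma> ((m, p # h) # st) =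
     (if has_move G m p
      then (fst (snd (\<sigma> m (p # h))), (m, snd (snd (\<sigma> m (p # h))) # p # h) # st)
      else forced_succ G m p h st)"
| "play_succ G \<sigma> _ = (0, [])"

definition play_cfg :: "('m, 'v, 'b, 'z) rgg_scheme \<Rightarrow> ('m, 'v, 'b) mstrategy \<Rightarrow> nat
    \<Rightarrow> ('m, 'v, 'b) config" where
  "play_cfg G \<sigma> i = ((snd \<circ> play_succ G \<sigma>) ^^ i) (init_config G)"

definition play_wt :: "('m, 'v, 'b, 'z) rgg_scheme \<Rightarrow> ('m, 'v, 'b) mstrategy \<Rightarrow> nat \<Rightarrow> int" where
  "play_wt G \<sigma> i = fst (play_succ G \<sigma> (play_cfg G \<sigma> i))"

lemma play_cfg_0: "play_cfg G \<sigma> 0 = init_config G"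
  by (simp add: play_cfg_def)

lemma play_cfg_Suc: "play_cfg G \<sigma> (Suc i) = snd (play_succ G \<sigma> (play_cfg G \<sigma> i))"
  by (simp add: play_cfg_def)

lemma legal_strategy_move:
  assumes one_player: "\<And>m. own1 G m = UNIV" and legal: "legal_strategy G \<sigma>"
    and move: "has_move G m p"
  shows "\<sigma> m (p # h) \<in> trans G m \<and> fst (\<sigma> m (p # h)) = p"
  using legal move one_player unfolding legal_strategy_def has_move_def by blast

lemma step_determined:
  assumes st: "step G x w y"
    and follows: "\<And>m p h s. x = (m, p # h) # s \<Longrightarrow> has_move G m p \<Longrightarrow>
                    \<exists>q. \<sigma> m (p # h) = (p, w, q) \<and> y = (m, q # p # h) # s"
  shows "(w, y) = play_succ G \<sigma> x"
proof -
  obtain m p h s where x: "x = (m, p # h) # s"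
    using st by (cases rule: step.cases) auto
  show ?thesis
  proof (cases "has_move G m p")
    case True
    then show ?thesis using follows[OF x] x by auto
  next
    case False
    from st show ?thesis
    proof (cases rule: step.cases)
      case (internal p' q m' h' st')
      then have "has_move G m p" using x by (force simp: has_move_def)
      with False show ?thesis ..
    qed (use x False in auto)
  qed
qed

lemma consistent_play_is_play:
  assumes one_player: "\<And>m. own1 G m = UNIV" and play: "consistent_play G \<sigma> c w"
  shows "c = play_cfg G \<sigma> \<and> w = play_wt G \<sigma>"
proof -
  have det: "(w i, c (Suc i)) = play_succ G \<sigma> (c i)" for i
  proof (rule step_determined)
    show "step G (c i) (w i) (c (Suc i))"
      using play by (simp add: consistent_play_def)
  next
    fix m p h s assume "c i = (m, p # h) # s" "has_move G m p"
    then show "\<exists>q. \<sigma> m (p # h) = (p, w i, q) \<and> c (Suc i) = (m, q # p # h) # s"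
      using play one_player unfolding consistent_play_def has_move_def by blast
  qed
  have cfg: "c i = play_cfg G \<sigma> i" for i
  proof (induction i)
    case 0 then show ?case using play by (simp add: consistent_play_def play_cfg_0)
  next
    case (Suc i) then show ?case using det[of i] by (metis play_cfg_Suc snd_conv)
  qed
  have "w i = play_wt G \<sigma> i" for i
    using det[of i] cfg[of i] by (simp add: play_wt_def prod_eq_iff)
  with cfg show ?thesis by auto
qed

lemma play_is_consistent:
  assumes one_player: "\<And>m. own1 G m = UNIV" and legal: "legal_strategy G \<sigma>"
    and steps: "\<And>i. step G (play_cfg G \<sigma> i) (play_wt G \<sigma> i) (play_cfg G \<sigma> (Suc i))"
  shows "consistent_play G \<sigma> (play_cfg G \<sigma>) (play_wt G \<sigma>)"
  unfolding consistent_play_def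
proof (intro conjI allI impI)
  fix i m p h st
  assume at: "play_cfg G \<sigma> i = (m, p # h) # st \<and> p \<in> own1 G m \<and> (\<exists>t\<in>trans G m. fst t = p)"
  then have "fst (\<sigma> m (p # h)) = p"
    using legal unfolding legal_strategy_def by blast
  then show "\<exists>q. \<sigma> m (p # h) = (p, play_wt G \<sigma> i, q) \<and> play_cfg G \<sigma> (Suc i) = (m, q # p # h) # st"
    using at by (simp add: play_cfg_Suc play_wt_def has_move_def prod_eq_iff)
qed (simp_all add: play_cfg_0 steps)

theorem modular_winning_iff_play:
  assumes one_player: "\<And>m. own1 G m = UNIV"
  shows "modular_winning G \<sigma> \<longleftrightarrow> legal_strategy G \<sigma> \<and>
     ((\<forall>i. step G (play_cfg G \<sigma> i) (play_wt G \<sigma> i) (play_cfg G \<sigma> (Suc i)))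
        \<longrightarrow> liminf_avg_nonneg (play_wt G \<sigma>))"
  unfolding modular_winning_def
  using play_is_consistent[OF one_player] consistent_play_is_play[OF one_player]
  by (metis consistent_play_def)

fun run :: "('m, 'v, 'b, 'z) rgg_scheme \<Rightarrow> ('m, 'v, 'b) mstrategy \<Rightarrow> nat
    \<Rightarrow> ('m, 'v, 'b) config \<Rightarrow> int \<times> ('m, 'v, 'b) config" where
  "run G \<sigma> 0 c = (0, c)"
| "run G \<sigma> (Suc k) c =
     (case play_succ G \<sigma> c of (w, c') \<Rightarrow> (case run G \<sigma> k c' of (s, c'') \<Rightarrow> (w + s, c'')))"

lemma run_add:
  "run G \<sigma> (k + l) c = (case run G \<sigma> k c of (s, c') \<Rightarrow> (case run G \<sigma> l c' of (s', c'') \<Rightarrow> (s + s', c'')))"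
  by (induction k arbitrary: c) (auto simp: split_def)

lemma run_from_init: "run G \<sigma> k (init_config G) = ((\<Sum>i<k. play_wt G \<sigma> i), play_cfg G \<sigma> k)"
proof (induction k)
  case 0 then show ?case by (simp add: play_cfg_0)
next
  case (Suc k)
  have "run G \<sigma> (k + 1) (init_config G) = ((\<Sum>i<Suc k. play_wt G \<sigma> i), play_cfg G \<sigma> (Suc k))"
    unfolding run_add Suc by (simp add: split_def play_wt_def play_cfg_Suc)
  then show ?case by simp
qed

section \<open>Structure of the game \<open>A\<^sub>\<phi>\<close>\<close>

lemma phi_game_simps [simp]:
  "init_config (phi_game n cls) = [(M0, [Nd En])]"
  "entries (phi_game n cls) m = {En}"
  "exits (phi_game n cls) m = {Ex}"
  "own1 (phi_game n cls) m = UNIV"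
  "boxes (phi_game n cls) M0 = {..<length cls}"
  "boxes (phi_game n cls) (MCl i) = {..<3}"
  "boxes (phi_game n cls) (MLit y) = {0}"
  "invokes (phi_game n cls) M0 b = MCl b"
  "invokes (phi_game n cls) (MCl i) b = MLit (cls ! i ! b)"
  "invokes (phi_game n cls) (MLit y) b = MLit (neg_lit y)"
  by (simp_all add: phi_game_def init_config_def)

lemma phi_game_trans:
  "trans (phi_game n cls) M0 = (if cls = [] then {} else
     {(Nd En, 0, Cl 0 En)} \<union> {(Rt i Ex, 0, Cl (Suc i mod length cls) En) | i. i < length cls})"
  "trans (phi_game n cls) (MCl i) = {(Nd En, 0, Cl j En) | j. j < 3} \<union> {(Rt j Ex, 0, Nd Ex) | j. j < 3}"
  "trans (phi_game n cls) (MLit y) = {(Nd En, -1, Nd Ex), (Nd En, -1, Cl 0 En), (Rt 0 Ex, 2, Nd Ex)}"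
  by (simp_all add: phi_game_def)

lemma phi_game_has_move [simp]:
  "has_move (phi_game n cls) M0 p \<longleftrightarrow> cls \<noteq> [] \<and> (p = Nd En \<or> (\<exists>i<length cls. p = Rt i Ex))"
  "has_move (phi_game n cls) (MCl i) p \<longleftrightarrow> p = Nd En \<or> (\<exists>j<3. p = Rt j Ex)"
  "has_move (phi_game n cls) (MLit y) p \<longleftrightarrow> p = Nd En \<or> p = Rt 0 Ex"
  unfolding has_move_def phi_game_trans by force+

lemma phi_game_step_weight:
  assumes "step (phi_game n cls) x w y"
  shows "w \<ge> -1"
  using assms
proof (cases rule: step.cases)
  case (internal p q m h st)
  then show ?thesis by (cases m) (auto simp: phi_game_trans split: if_splits)
qed auto

lemma phi_game_empty_stuck:
  "\<not> step (phi_game n []) (init_config (phi_game n [])) w y"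
proof
  assume "step (phi_game n []) (init_config (phi_game n [])) w y"
  then show False by (cases rule: step.cases) (auto simp: phi_game_trans)
qed

text \<open>For a nonempty formula every legal strategy produces an infinite play.\<close>

locale formula_game =
  fixes n :: nat and cls :: "lit list list"
  assumes nonempty: "cls \<noteq> []"
begin

abbreviation "A \<equiv> phi_game n cls"

definition live_pos :: "modname \<Rightarrow> (vtx, nat) pos \<Rightarrow> bool" where
  "live_pos m p \<longleftrightarrow> has_move A m p \<or> (\<exists>b\<in>boxes A m. p = Cl b En) \<or> (p = Nd Ex \<and> m \<noteq> M0)"

fun callers_ok :: "modname \<Rightarrow> (modname, vtx, nat) config \<Rightarrow> bool" where
  "callers_ok m [] \<longleftrightarrow> m = M0"
| "callers_ok m ((m', h) # st) \<longleftrightarrow> m \<noteq> M0 \<and>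
     (\<exists>b h'. h = Cl b En # h' \<and> b \<in> boxes A m' \<and> invokes A m' b = m) \<and> callers_ok m' st"

fun live_config :: "(modname, vtx, nat) config \<Rightarrow> bool" where
  "live_config ((m, p # h) # st) \<longleftrightarrow> live_pos m p \<and> callers_ok m st"
| "live_config _ \<longleftrightarrow> False"

lemma transition_target_live: "(p, w, q) \<in> trans A m \<Longrightarrow> live_pos m q"
  by (cases m) (auto simp: phi_game_trans live_pos_def split: if_splits)

lemma live_config_step:
  assumes legal: "legal_strategy A \<sigma>" and live: "live_config c"
  shows "step A c (fst (play_succ A \<sigma> c)) (snd (play_succ A \<sigma> c))
         \<and> live_config (snd (play_succ A \<sigma> c))"
proof -
  obtain m p h st where c: "c = (m, p # h) # st" and lp: "live_pos m p" and callers: "callers_ok m st"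
    using live by (cases c rule: live_config.cases) auto
  consider (move) "has_move A m p"
    | (call) b where "\<not> has_move A m p" "b \<in> boxes A m" "p = Cl b En"
    | (return) "\<not> has_move A m p" "p = Nd Ex" "m \<noteq> M0"
    using lp unfolding live_pos_def by blast
  then show ?thesis
  proof cases
    case move
    obtain w q where \<sigma>: "\<sigma> m (p # h) = (p, w, q)" and tr: "(p, w, q) \<in> trans A m"
      using legal_strategy_move[OF _ legal move, of h] by (metis phi_game_simps(4) prod.collapse)
    then show ?thesis
      using move c callers step.internal[OF tr, of h st] transition_target_live[OF tr] by simp
  next
    case call
    have "invokes A m b \<noteq> M0" "live_pos (invokes A m b) (Nd En)"
      by (cases m; simp add: live_pos_def)+
    moreover have "step A c 0 ((invokes A m b, [Nd En]) # c)"
      unfolding c call(3) by (rule step.call) (use call in auto)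
    ultimately show ?thesis using call c callers by auto
  next
    case return
    then obtain m' b h' st' where st: "st = (m', Cl b En # h') # st'" and b: "b \<in> boxes A m'"
      and inv: "invokes A m' b = m" and callers': "callers_ok m' st'"
      using callers by (cases st) auto
    have "step A c 0 ((m', Rt b Ex # Cl b En # h') # st')"
      unfolding c st return(2) by (rule step.return) (use inv in auto)
    moreover have "live_pos m' (Rt b Ex)"
      using b by (cases m') (auto simp: live_pos_def)
    ultimately show ?thesis using return c st callers' by simp
  qed
qed

lemma play_steps:
  assumes legal: "legal_strategy A \<sigma>"
  shows "step A (play_cfg A \<sigma> i) (play_wt A \<sigma> i) (play_cfg A \<sigma> (Suc i))"
proof -
  have "live_config (play_cfg A \<sigma> i)"
  proof (induction i)
    case 0 then show ?case using nonempty by (simp add: play_cfg_0 live_pos_def)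
  next
    case (Suc i) then show ?case using live_config_step[OF legal] by (simp add: play_cfg_Suc)
  qed
  then show ?thesis using live_config_step[OF legal] by (simp add: play_wt_def play_cfg_Suc)
qed

end

theorem phi_game_winning_iff:
  "modular_winning (phi_game n cls) \<sigma> \<longleftrightarrow> legal_strategy (phi_game n cls) \<sigma> \<and>
     (cls \<noteq> [] \<longrightarrow> liminf_avg_nonneg (play_wt (phi_game n cls) \<sigma>))"
proof (cases "cls = []")
  case True
  then have "\<not> step (phi_game n cls) (play_cfg (phi_game n cls) \<sigma> 0) w y" for w y
    using phi_game_empty_stuck by (simp add: play_cfg_0)
  with True show ?thesis by (auto simp: modular_winning_iff_play)
next
  case False
  then interpret formula_game n cls by unfold_locales
  show ?thesis using False play_steps by (auto simp: modular_winning_iff_play)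
qed

section \<open>The play of a legal strategy\<close>

text \<open>Within one invocation a module always starts with the history \<open>[Nd En]\<close>, so a modular
  strategy is summarised by: whether the module of literal \<open>y\<close> takes its "true" edge, and
  which literal the module of clause \<open>i\<close> calls.\<close>

definition plays_true :: "(modname, vtx, nat) mstrategy \<Rightarrow> lit \<Rightarrow> bool" where
  "plays_true \<sigma> y \<longleftrightarrow> \<sigma> (MLit y) [Nd En] = (Nd En, -1, Cl 0 En)"

definition clause_choice :: "(modname, vtx, nat) mstrategy \<Rightarrow> nat \<Rightarrow> nat" where
  "clause_choice \<sigma> i = (case snd (snd (\<sigma> (MCl i) [Nd En])) of Cl j _ \<Rightarrow> j | _ \<Rightarrow> 0)"

definition chosen_lit :: "lit list list \<Rightarrow> (modname, vtx, nat) mstrategy \<Rightarrow> nat \<Rightarrow> lit" where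
  "chosen_lit cls \<sigma> i = cls ! i ! clause_choice \<sigma> i"

definition diverges :: "(modname, vtx, nat) mstrategy \<Rightarrow> lit \<Rightarrow> bool" where
  "diverges \<sigma> y \<longleftrightarrow> plays_true \<sigma> y \<and> plays_true \<sigma> (neg_lit y)"

definition faithful :: "lit list list \<Rightarrow> (modname, vtx, nat) mstrategy \<Rightarrow> bool" where
  "faithful cls \<sigma> \<longleftrightarrow> (\<forall>i<length cls. plays_true \<sigma> (chosen_lit cls \<sigma> i)
                                         \<and> \<not> plays_true \<sigma> (neg_lit (chosen_lit cls \<sigma> i)))"

lemma legal_clause_entry:
  assumes "legal_strategy (phi_game n cls) \<sigma>"
  shows "\<exists>j<3. \<sigma> (MCl i) [Nd En] = (Nd En, 0, Cl j En)"
  using legal_strategy_move[OF _ assms, of "MCl i" "Nd En" "[]"] by (auto simp: phi_game_trans)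

lemma clause_choice_lt:
  assumes "legal_strategy (phi_game n cls) \<sigma>"
  shows "clause_choice \<sigma> i < 3"
  using legal_clause_entry[OF assms, of i] by (auto simp: clause_choice_def)

text \<open>Passing once through clause \<open>i\<close> (from its call in \<open>A\<^sub>0\<close> to the next call) takes 12 steps
  of total weight 0 if the called literal takes "true" (and its negation "false"), and 8 steps
  of weight \<open>-1\<close> if it takes "false".\<close>

definition round_len :: "lit list list \<Rightarrow> (modname, vtx, nat) mstrategy \<Rightarrow> nat \<Rightarrow> nat" where
  "round_len cls \<sigma> i = (if plays_true \<sigma> (chosen_lit cls \<sigma> i) then 12 else 8)"

definition round_wt :: "lit list list \<Rightarrow> (modname, vtx, nat) mstrategy \<Rightarrow> nat \<Rightarrow> int" where
  "round_wt cls \<sigma> i = (if plays_true \<sigma> (chosen_lit cls \<sigma> i) then 0 else -1)"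

locale formula_strategy = formula_game +
  fixes \<sigma> :: "(modname, vtx, nat) mstrategy"
  assumes legal: "legal_strategy A \<sigma>"
begin

lemma legal_move: "has_move A m p \<Longrightarrow> \<sigma> m (p # h) \<in> trans A m \<and> fst (\<sigma> m (p # h)) = p"
  by (rule legal_strategy_move) (simp_all add: legal)

lemma strategy_M0 [simp]:
  "\<sigma> M0 (Nd En # h) = (Nd En, 0, Cl 0 En)"
  "i < length cls \<Longrightarrow> \<sigma> M0 (Rt i Ex # h) = (Rt i Ex, 0, Cl (Suc i mod length cls) En)"
  using legal_move[of M0 "Nd En" h] legal_move[of M0 "Rt i Ex" h] nonempty
  by (auto simp: phi_game_trans)

lemma strategy_MCl [simp]:
  "\<sigma> (MCl i) [Nd En] = (Nd En, 0, Cl (clause_choice \<sigma> i) En)"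
  "j < 3 \<Longrightarrow> \<sigma> (MCl i) (Rt j Ex # h) = (Rt j Ex, 0, Nd Ex)"
  using legal_clause_entry[OF legal, of i] legal_move[of "MCl i" "Rt j Ex" h]
  by (auto simp: phi_game_trans clause_choice_def)

lemma strategy_MLit [simp]:
  "\<not> plays_true \<sigma> y \<Longrightarrow> \<sigma> (MLit y) [Nd En] = (Nd En, -1, Nd Ex)"
  "\<sigma> (MLit y) (Rt 0 Ex # h) = (Rt 0 Ex, 2, Nd Ex)"
  using legal_move[of "MLit y" "Nd En" "[]"] legal_move[of "MLit y" "Rt 0 Ex" h]
  by (auto simp: phi_game_trans plays_true_def)

lemma run_start: "run A \<sigma> 1 [(M0, [Nd En])] = (0, [(M0, [Cl 0 En, Nd En])])"
  using nonempty by simp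

lemma run_enter_clause:
  "run A \<sigma> 3 [(M0, Cl i En # H)] =
     (0, [(MLit (chosen_lit cls \<sigma> i), [Nd En]), (MCl i, [Cl (clause_choice \<sigma> i) En, Nd En]),
          (M0, Cl i En # H)])"
  by (simp add: numeral_eq_Suc chosen_lit_def clause_choice_lt[OF legal])

lemma run_descent:
  assumes "diverges \<sigma> y"
  shows "fst (run A \<sigma> (2 * k) ((MLit y, [Nd En]) # S)) = - int k"
  using assms
proof (induction k arbitrary: y S)
  case 0 then show ?case by simp
next
  case (Suc k)
  have "diverges \<sigma> (neg_lit y)"
    using Suc.prems by (simp add: diverges_def neg_lit_def)
  moreover have "run A \<sigma> 2 ((MLit y, [Nd En]) # S) =
      (-1, (MLit (neg_lit y), [Nd En]) # (MLit y, [Cl 0 En, Nd En]) # S)"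
    using Suc.prems by (simp add: numeral_eq_Suc diverges_def plays_true_def)
  ultimately show ?case
    using Suc.IH[of "neg_lit y"] unfolding mult_Suc_right add_2_eq_Suc'[symmetric] run_add
    by (simp add: split_def)
qed

lemma run_clause_round:
  assumes i: "i < length cls" and nd: "\<not> diverges \<sigma> (chosen_lit cls \<sigma> i)"
  shows "run A \<sigma> (round_len cls \<sigma> i) [(M0, Cl i En # H)] =
     (round_wt cls \<sigma> i, [(M0, Cl (Suc i mod length cls) En # Rt i Ex # Cl i En # H)])"
proof (cases "plays_true \<sigma> (chosen_lit cls \<sigma> i)")
  case True
  then have "\<not> plays_true \<sigma> (neg_lit (chosen_lit cls \<sigma> i))" using nd by (simp add: diverges_def)
  then show ?thesis
    using True[unfolded chosen_lit_def] True[unfolded plays_true_def] i nonempty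
      clause_choice_lt[OF legal, of i]
    by (simp add: round_len_def round_wt_def numeral_eq_Suc chosen_lit_def)
next
  case False
  then show ?thesis using i nonempty clause_choice_lt[OF legal, of i]
    by (simp add: round_len_def round_wt_def numeral_eq_Suc chosen_lit_def)
qed

lemma run_clauses:
  assumes "q \<le> length cls" and "\<forall>i<q. \<not> diverges \<sigma> (chosen_lit cls \<sigma> i)"
  shows "\<exists>H'. run A \<sigma> (\<Sum>i<q. round_len cls \<sigma> i) [(M0, Cl 0 En # H)] =
               ((\<Sum>i<q. round_wt cls \<sigma> i), [(M0, Cl (q mod length cls) En # H')])"
  using assms
proof (induction q)
  case 0 then show ?case by simp
next
  case (Suc q)
  then obtain H' where H': "run A \<sigma> (\<Sum>i<q. round_len cls \<sigma> i) [(M0, Cl 0 En # H)] =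
               ((\<Sum>i<q. round_wt cls \<sigma> i), [(M0, Cl q En # H')])"
    by auto
  have "q < length cls" "\<not> diverges \<sigma> (chosen_lit cls \<sigma> q)" using Suc.prems by auto
  from run_clause_round[OF this, of H'] H' show ?case
    by (simp add: run_add)
qed

definition cycle_len :: nat where
  "cycle_len = (\<Sum>i<length cls. round_len cls \<sigma> i)"

definition cycle_wt :: int where
  "cycle_wt = (\<Sum>i<length cls. round_wt cls \<sigma> i)"

lemma cycle_len_pos: "cycle_len > 0"
proof -
  have "round_len cls \<sigma> 0 \<le> cycle_len"
    unfolding cycle_len_def using nonempty by (intro member_le_sum) auto
  then show ?thesis by (simp add: round_len_def split: if_splits)
qed

text \<open>Without divergence the play is periodic after its first step.\<close>

lemma play_sum_cycles:
  assumes "\<forall>i<length cls. \<not> diverges \<sigma> (chosen_lit cls \<sigma> i)"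
  shows "(\<Sum>i<1 + cycle_len * r. play_wt A \<sigma> i) = int r * cycle_wt"
proof -
  have "\<exists>H. run A \<sigma> (1 + cycle_len * r) [(M0, [Nd En])] = (int r * cycle_wt, [(M0, Cl 0 En # H)])"
  proof (induction r)
    case 0 then show ?case using run_start by simp
  next
    case (Suc r)
    then obtain H where H: "run A \<sigma> (1 + cycle_len * r) [(M0, [Nd En])] = (int r * cycle_wt, [(M0, Cl 0 En # H)])"
      by blast
    obtain H' where H': "run A \<sigma> cycle_len [(M0, Cl 0 En # H)] = (cycle_wt, [(M0, Cl 0 En # H')])"
      using run_clauses[of "length cls" H] assms unfolding cycle_len_def cycle_wt_def by auto
    have split: "1 + cycle_len * Suc r = (1 + cycle_len * r) + cycle_len" by simp
    show ?case
      unfolding split run_add[of _ _ "1 + cycle_len * r"] H using H' by (simp add: algebra_simps)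
  qed
  then obtain H where "run A \<sigma> (1 + cycle_len * r) (init_config A) = (int r * cycle_wt, [(M0, Cl 0 En # H)])"
    by auto
  from this[unfolded run_from_init] show ?thesis by simp
qed

lemma faithful_wins:
  assumes "faithful cls \<sigma>"
  shows "liminf_avg_nonneg (play_wt A \<sigma>)"
proof (rule liminf_avg_nonneg_if_checkpoints)
  show "cycle_len > 0" by (rule cycle_len_pos)
  show "play_wt A \<sigma> i \<ge> - 1" for i
    by (rule phi_game_step_weight[OF play_steps[OF legal]])
  have "\<forall>i<length cls. \<not> diverges \<sigma> (chosen_lit cls \<sigma> i)" and "cycle_wt = 0"
    using assms by (simp_all add: faithful_def diverges_def cycle_wt_def round_wt_def)
  then show "(\<Sum>i<1 + cycle_len * r. play_wt A \<sigma> i) \<ge> 0" for r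
    using play_sum_cycles by simp
qed simp

lemma divergence_loses:
  assumes "\<exists>i<length cls. diverges \<sigma> (chosen_lit cls \<sigma> i)"
  shows "\<not> liminf_avg_nonneg (play_wt A \<sigma>)"
proof -
  define i1 where "i1 = (LEAST i. i < length cls \<and> diverges \<sigma> (chosen_lit cls \<sigma> i))"
  have i1: "i1 < length cls" "diverges \<sigma> (chosen_lit cls \<sigma> i1)"
    using LeastI_ex[OF assms[unfolded Bex_def]] unfolding i1_def by blast+
  have "\<forall>i<i1. \<not> diverges \<sigma> (chosen_lit cls \<sigma> i)"
    using not_less_Least i1(1) unfolding i1_def by fastforce
  then obtain H where prefix: "run A \<sigma> (\<Sum>i<i1. round_len cls \<sigma> i) [(M0, Cl 0 En # [Nd En])] =
      ((\<Sum>i<i1. round_wt cls \<sigma> i), [(M0, Cl i1 En # H)])"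
    using run_clauses[of i1 "[Nd En]"] i1(1) by auto
  define T where "T = 1 + (\<Sum>i<i1. round_len cls \<sigma> i) + 3"
  define s where "s = (\<Sum>i<i1. round_wt cls \<sigma> i)"
  define S where "S = [(MCl i1, [Cl (clause_choice \<sigma> i1) En, Nd En]), (M0, Cl i1 En # H)]"
  have enter: "run A \<sigma> T [(M0, [Nd En])] = (s, (MLit (chosen_lit cls \<sigma> i1), [Nd En]) # S)"
    unfolding T_def s_def S_def by (simp only: run_add run_start prefix run_enter_clause prod.case) simp
  have descent: "fst (run A \<sigma> (T + 2 * j) (init_config A)) = s - int j" for j
    unfolding phi_game_simps(1) run_add enter by (simp add: split_def run_descent[OF i1(2)])
  have decrease: "(\<Sum>i<T + 2 * j. play_wt A \<sigma> i) \<le> s - int j" for j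
    using descent[of j] unfolding run_from_init by simp
  show ?thesis
    by (rule not_liminf_avg_nonneg_if_linear_decrease[of 2, OF _ decrease]) simp
qed

lemma false_choice_loses:
  assumes "\<forall>i<length cls. \<not> diverges \<sigma> (chosen_lit cls \<sigma> i)"
    and "\<exists>i<length cls. \<not> plays_true \<sigma> (chosen_lit cls \<sigma> i)"
  shows "\<not> liminf_avg_nonneg (play_wt A \<sigma>)"
proof (rule not_liminf_avg_nonneg_if_linear_decrease)
  show "cycle_len > 0" by (rule cycle_len_pos)
  obtain i0 where i0: "i0 < length cls" "round_wt cls \<sigma> i0 = -1"
    using assms(2) by (auto simp: round_wt_def)
  have "cycle_wt = round_wt cls \<sigma> i0 + (\<Sum>i\<in>{..<length cls} - {i0}. round_wt cls \<sigma> i)"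
    unfolding cycle_wt_def using i0(1) by (simp add: sum.remove)
  also have "\<dots> \<le> -1"
    using i0(2) sum_nonpos[of "{..<length cls} - {i0}" "round_wt cls \<sigma>"] by (simp add: round_wt_def)
  finally have "int j * cycle_wt \<le> - int j" for j
    using mult_left_mono[of cycle_wt "-1" "int j"] by simp
  then show "(\<Sum>i<1 + cycle_len * j. play_wt A \<sigma> i) \<le> 0 - int j" for j
    using play_sum_cycles[OF assms(1)] by simp
qed

theorem wins_iff_faithful: "liminf_avg_nonneg (play_wt A \<sigma>) \<longleftrightarrow> faithful cls \<sigma>"
proof
  assume wins: "liminf_avg_nonneg (play_wt A \<sigma>)"
  then have "\<forall>i<length cls. \<not> diverges \<sigma> (chosen_lit cls \<sigma> i)"
    using divergence_loses by blast
  moreover from this wins have "\<forall>i<length cls. plays_true \<sigma> (chosen_lit cls \<sigma> i)"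
    using false_choice_loses by blast
  ultimately show "faithful cls \<sigma>" by (simp add: faithful_def diverges_def)
qed (rule faithful_wins)

end

section \<open>Winning strategies and satisfying assignments\<close>

theorem phi_game_winning_iff_faithful:
  "modular_winning (phi_game n cls) \<sigma> \<longleftrightarrow> legal_strategy (phi_game n cls) \<sigma> \<and> faithful cls \<sigma>"
proof (cases "cls = []")
  case True
  then show ?thesis by (simp add: phi_game_winning_iff faithful_def)
next
  case False
  show ?thesis
  proof (cases "legal_strategy (phi_game n cls) \<sigma>")
    case True
    then interpret formula_strategy n cls \<sigma> using False by unfold_locales
    show ?thesis using False by (simp add: phi_game_winning_iff wins_iff_faithful legal)
  qed (simp add: phi_game_winning_iff)
qed

text \<open>A faithful strategy sets \<open>x\<close> to true iff the module of \<open>x\<close> takes "true"; each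
  clause then contains its called literal, which is true under this assignment.\<close>

lemma faithful_satisfiable:
  assumes cnf: "is_3cnf n cls" and legal: "legal_strategy (phi_game n cls) \<sigma>"
    and faithful: "faithful cls \<sigma>"
  shows "satisfiable cls"
proof -
  define a where "a x = plays_true \<sigma> (x, True)" for x
  have "\<exists>l\<in>set c. lit_val a l" if "c \<in> set cls" for c
  proof -
    obtain i where i: "i < length cls" "c = cls ! i" using \<open>c \<in> set cls\<close> by (auto simp: in_set_conv_nth)
    have "length c = 3" using cnf that by (simp add: is_3cnf_def)
    then have mem: "chosen_lit cls \<sigma> i \<in> set c"
      using i clause_choice_lt[OF legal, of i] by (simp add: chosen_lit_def)
    obtain x b where xb: "chosen_lit cls \<sigma> i = (x, b)" by fastforce
    have "plays_true \<sigma> (x, b)" "\<not> plays_true \<sigma> (x, \<not> b)"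
      using faithful i xb by (auto simp: faithful_def neg_lit_def)
    then have "lit_val a (x, b)" by (cases b) (auto simp: a_def lit_val_def)
    with mem xb show ?thesis by metis
  qed
  then show ?thesis unfolding satisfiable_def by blast
qed

text \<open>Conversely, a satisfying assignment yields a faithful strategy: each clause calls a true
  literal, and literal modules take "true" exactly for true literals.\<close>

definition true_index :: "(nat \<Rightarrow> bool) \<Rightarrow> lit list \<Rightarrow> nat" where
  "true_index a c = (if \<exists>j<3. lit_val a (c ! j) then SOME j. j < 3 \<and> lit_val a (c ! j) else 0)"

lemma true_index_spec:
  "true_index a c < 3"
  "\<exists>j<3. lit_val a (c ! j) \<Longrightarrow> lit_val a (c ! true_index a c)"
  using someI_ex[of "\<lambda>j. j < 3 \<and> lit_val a (c ! j)"] by (auto simp: true_index_def)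

definition assignment_strategy :: "(nat \<Rightarrow> bool) \<Rightarrow> lit list list \<Rightarrow> (modname, vtx, nat) mstrategy" where
  "assignment_strategy a cls m h = (case m of
     M0 \<Rightarrow> (case h of Rt i x # _ \<Rightarrow> (Rt i x, 0, Cl (Suc i mod length cls) En)
                    | _ \<Rightarrow> (Nd En, 0, Cl 0 En))
   | MCl i \<Rightarrow> (case h of Rt j x # _ \<Rightarrow> (Rt j x, 0, Nd Ex)
                      | _ \<Rightarrow> (Nd En, 0, Cl (true_index a (cls ! i)) En))
   | MLit y \<Rightarrow> (case h of Rt j x # _ \<Rightarrow> (Rt j x, 2, Nd Ex)
                       | _ \<Rightarrow> (Nd En, -1, if lit_val a y then Cl 0 En else Nd Ex)))"

lemma assignment_strategy_legal: "legal_strategy (phi_game n cls) (assignment_strategy a cls)"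
  unfolding legal_strategy_def
proof (intro allI impI)
  fix m p h
  assume "p \<in> own1 (phi_game n cls) m \<and> (\<exists>t\<in>trans (phi_game n cls) m. fst t = p)"
  then have "has_move (phi_game n cls) m p" by (simp add: has_move_def)
  then show "assignment_strategy a cls m (p # h) \<in> trans (phi_game n cls) m \<and>
             fst (assignment_strategy a cls m (p # h)) = p"
    using true_index_spec(1)[of a] by (cases m) (auto simp: assignment_strategy_def phi_game_trans)
qed

lemma assignment_strategy_faithful:
  assumes cnf: "is_3cnf n cls" and sat: "\<forall>c\<in>set cls. \<exists>l\<in>set c. lit_val a l"
  shows "faithful cls (assignment_strategy a cls)"
  unfolding faithful_def
proof (intro allI impI)
  fix i assume i: "i < length cls"
  then have c: "cls ! i \<in> set cls" by simp
  then have "length (cls ! i) = 3" using cnf by (simp add: is_3cnf_def)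
  with sat c have "\<exists>j<3. lit_val a (cls ! i ! j)" by (metis in_set_conv_nth)
  then have "lit_val a (chosen_lit cls (assignment_strategy a cls) i)"
    by (simp add: chosen_lit_def clause_choice_def assignment_strategy_def true_index_spec)
  then show "plays_true (assignment_strategy a cls) (chosen_lit cls (assignment_strategy a cls) i) \<and>
      \<not> plays_true (assignment_strategy a cls) (neg_lit (chosen_lit cls (assignment_strategy a cls) i))"
    by (simp add: plays_true_def assignment_strategy_def lit_val_def neg_lit_def)
qed

theorem lemma12:
  fixes n :: nat and cls :: "lit list list"
  assumes "is_3cnf n cls"
  shows "has_modular_winning (phi_game n cls) \<longleftrightarrow> satisfiable cls"
proof -
  have "has_modular_winning (phi_game n cls) \<longleftrightarrow>
        (\<exists>\<sigma>. legal_strategy (phi_game n cls) \<sigma> \<and> faithful cls \<sigma>)"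
    by (simp add: has_modular_winning_def phi_game_winning_iff_faithful)
  also have "\<dots> \<longleftrightarrow> satisfiable cls"
    using faithful_satisfiable[OF assms] assignment_strategy_legal assignment_strategy_faithful[OF assms]
    unfolding satisfiable_def by blast
  finally show ?thesis .
qed

end
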